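(* Let $c$ be a circular operator in a $\mathrm{II}_1$-factor $(\mathscr{A},\varphi)$ and let $D_t$ be the dilation semigroup on $L^2_{hol}(c)$, $D_t\big(\sum_{n\ge0}\lambda_n c^n\big)=\sum_{n\ge0}e^{-nt}\lambda_nc^n$. For each even integer $p\ge4$ there is a constant $\alpha_p$ such that for all $T\in L^2_{hol}(c)$ and all $0<t<1$, \[ \|D_tT\|_p\le\alpha_p\,t^{-1+\frac{2}{p}}\,\|T\|_2. \]
   Context: $\varphi$ is the faithful normal tracial state. A circular operator $c$ (normalized) is one whose only nonzero free cumulants in $c,c^\ast$ are $\kappa_2[c,c^\ast]=\kappa_2[c^\ast,c]=1$; equivalently $c=(s+is')/\sqrt2$ with $s,s'$ free standard semicircular. $L^2_{hol}(c)$ is the closure in $L^2(W^\ast(c),\varphi)$ of the polynomials in $c$ (not $c^\ast$); its elements are $\sum_n\lambda_nc^n$ with $\sum|\lambda_n|^2<\infty$, and $\|T\|_2^2=\varphi(TT^\ast)$. For even $p$, $\|x\|_p^p=\varphi((xx^\ast)^{p/2})$ (the noncommutative $L^p$ norm, possibly $+\infty$). *)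

theory Defs
  imports "HOL-Analysis.Analysis"
begin

text \<open>Words in c and c-star: True stands for c, False for c-star.
  The *-distribution of a normalized circular operator with respect to the trace
  is given by the moment-cumulant formula: the trace of a word equals the number of
  non-crossing pair partitions of its positions in which every block pairs a c
  with a c-star (only the second cumulants kappa2[c,c*] = kappa2[c*,c] = 1 are nonzero).\<close>

definition nc_star_pairings :: "bool list \<Rightarrow> (nat \<times> nat) set set" where
  "nc_star_pairings w = {P. P \<subseteq> {(i,j). i < j \<and> j < length w}
      \<and> (\<forall>k < length w. \<exists>!q \<in> P. fst q = k \<or> snd q = k)
      \<and> (\<forall>(i,j) \<in> P. w ! i \<noteq> w ! j)
      \<and> (\<forall>(a,b) \<in> P. \<forall>(c,d) \<in> P. \<not> (a < c \<and> c < b \<and> b < d))}"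

definition circ_trace_word :: "bool list \<Rightarrow> complex" where
  "circ_trace_word w = of_nat (card (nc_star_pairings w))"

text \<open>The truncation x_N = sum_{n<=N} a_n c^n; then
  circ_moment k a N = phi((x_N x_N^* )^k), expanded multilinearly using
  x_N x_N^* = sum_{n,m<=N} a_n conj(a_m) c^n (c^* )^m.\<close>

definition circ_moment :: "nat \<Rightarrow> (nat \<Rightarrow> complex) \<Rightarrow> nat \<Rightarrow> complex" where
  "circ_moment k a N =
     (\<Sum>nms \<in> {xs. set xs \<subseteq> {..N} \<times> {..N} \<and> length xs = k}.
        (\<Prod>(n,m) \<leftarrow> nms. a n * cnj (a m)) *
        circ_trace_word (concat (map (\<lambda>(n,m). replicate n True @ replicate m False) nms)))"

text \<open>Noncommutative L^p norm (p even) of T = sum a_n c^n, as the limit of the norms of the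
  truncations (for the operators considered here the series converge in operator norm).\<close>

definition hol_Lp_norm :: "nat \<Rightarrow> (nat \<Rightarrow> complex) \<Rightarrow> real" where
  "hol_Lp_norm p a = (cmod (lim (\<lambda>N. circ_moment (p div 2) a N))) powr (1 / real p)"

definition dilation :: "real \<Rightarrow> (nat \<Rightarrow> complex) \<Rightarrow> (nat \<Rightarrow> complex)" where
  "dilation t a = (\<lambda>n. complex_of_real (exp (- real n * t)) * a n)"

end

theory Submission
  imports Defs
begin

text \<open>Realise c as ``push True or pop a False'' and c* as ``push False or pop a True'' on
  functions of stacks (words in two letters), i.e. on the full Fock space over a two-dimensional
  space. The trace of a word in c and c* counts its non-crossing *-pairings, and these inject into
  the runs of this push/pop automaton from the empty stack to the empty stack. Hence the
  (p/2)-th moment of the sum of b n c^n, with b n = exp (-n t) |a n|, is dominated by the vacuum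
  coefficient of (G True G False)^(p/2), where G x is the sum of b n (stack_op x)^n. A
  Haagerup-type estimate norm ((stack_op x)^n) \<le> 2 sqrt (n + 1) bounds norm (G x) by
  2 times the sum of b n sqrt (n + 1), hence by 3 norm a / t (Cauchy-Schwarz). Therefore the
  p-th power of the L^p norm of D t T is at most (norm a)^2 (3 norm a / t)^(p - 2), which is the
  claim with alpha = 3.\<close>

lemma sum_lessThan_nested_swap:
  "(\<Sum>j<L. \<Sum>i<j. g i j) = (\<Sum>i<L. \<Sum>j\<in>{Suc i..<L}. (g i j :: 'a::comm_monoid_add))"
proof (induction L)
  case (Suc L)
  have "(\<Sum>i<Suc L. \<Sum>j\<in>{Suc i..<Suc L}. g i j) = (\<Sum>i<L. \<Sum>j\<in>{Suc i..<Suc L}. g i j)"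
    by simp
  also have "\<dots> = (\<Sum>i<L. (\<Sum>j\<in>{Suc i..<L}. g i j) + g i L)"
    by (intro sum.cong refl) simp
  finally show ?case using Suc by (simp add: sum.distrib)
qed simp

lemma sum_splits_drop:
  "(\<Sum>l<length (drop k w). F (take l (drop k w)) (drop k w ! l) (drop (Suc l) (drop k w)))
     = (\<Sum>j\<in>{k..<length w}. F (drop k (take j w)) (w ! j) (drop (Suc j) w))"
proof -
  have "(\<Sum>l<length (drop k w). F (take l (drop k w)) (drop k w ! l) (drop (Suc l) (drop k w)))
      = (\<Sum>l<length w - k. F (drop k (take (k + l) w)) (w ! (k + l)) (drop (Suc (k + l)) w))"
    by (intro sum.cong refl) (simp_all add: take_drop add.commute)
  also have "\<dots> = (\<Sum>j\<in>{k..<length w}. F (drop k (take j w)) (w ! j) (drop (Suc j) w))"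
    using sum.atLeastLessThan_shift_0[of "\<lambda>j. F (drop k (take j w)) (w ! j) (drop (Suc j) w)" k "length w"]
    by (simp add: lessThan_atLeast0 comp_def)
  finally show ?thesis .
qed

lemma sum_splits_take:
  assumes "j \<le> length w"
  shows "(\<Sum>i<length (take j w). F (take i (take j w)) (take j w ! i) (drop (Suc i) (take j w)))
     = (\<Sum>i<j. F (take i w) (w ! i) (drop (Suc i) (take j w)))"
proof -
  have "length (take j w) = j" using assms by simp
  then show ?thesis by (intro sum.cong refl) simp_all
qed

lemma L2_set_subset_mono: "finite B \<Longrightarrow> A \<subseteq> B \<Longrightarrow> L2_set f A \<le> L2_set f B"
  unfolding L2_set_def by (intro real_sqrt_le_mono sum_mono2) auto

lemma power2_L2_set: "(L2_set f A)\<^sup>2 = (\<Sum>s\<in>A. (f s)\<^sup>2)"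
  unfolding L2_set_def by (simp add: sum_nonneg)

lemma L2_set_sum_le:
  "finite J \<Longrightarrow> L2_set (\<lambda>s. \<Sum>j\<in>J. f j s) A \<le> (\<Sum>j\<in>J. L2_set (f j) A)"
proof (induction J rule: finite_induct)
  case (insert j J)
  then show ?case
    using L2_set_triangle_ineq[of "f j" "\<lambda>s. \<Sum>i\<in>J. f i s" A] by simp
qed (simp add: L2_set_def)

lemma L2_set_sum_le_sqrt_card:
  assumes "finite J"
  shows "L2_set (\<lambda>s. \<Sum>j\<in>J. f j s) A \<le> sqrt (card J) * sqrt (\<Sum>j\<in>J. (L2_set (f j) A)\<^sup>2)"
proof -
  have "L2_set (\<lambda>s. \<Sum>j\<in>J. f j s) A \<le> (\<Sum>j\<in>J. \<bar>1\<bar> * \<bar>L2_set (f j) A\<bar>)"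
    using L2_set_sum_le[OF assms] by simp
  also have "\<dots> \<le> L2_set (\<lambda>_. 1) J * L2_set (\<lambda>j. L2_set (f j) A) J"
    by (rule L2_set_mult_ineq)
  finally show ?thesis by (simp add: L2_set_constant L2_set_def)
qed

lemma power2_L2_set_sum_orthogonal:
  assumes "finite J" and orth: "\<And>i j s. i \<in> J \<Longrightarrow> j \<in> J \<Longrightarrow> i \<noteq> j \<Longrightarrow> f i s * f j s = 0"
  shows "(L2_set (\<lambda>s. \<Sum>j\<in>J. f j s) A)\<^sup>2 = (\<Sum>j\<in>J. (L2_set (f j) A)\<^sup>2)"
proof -
  have "(\<Sum>j\<in>J. f j s)\<^sup>2 = (\<Sum>j\<in>J. (f j s)\<^sup>2)" for s
  proof -
    have "(\<Sum>j\<in>J. f j s)\<^sup>2 = (\<Sum>i\<in>J. \<Sum>j\<in>J. if j = i then (f i s)\<^sup>2 else 0)"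
      unfolding power2_eq_square sum_product by (intro sum.cong refl) (auto simp: orth)
    then show ?thesis using assms(1) by simp
  qed
  then show ?thesis
    unfolding power2_L2_set by (simp add: sum.swap[of _ A])
qed

lemma sum_power2_reindex_le:
  assumes "inj_on h A" "h ` A \<subseteq> B" "finite B"
  shows "(\<Sum>x\<in>A. (\<phi> (h x))\<^sup>2) \<le> (\<Sum>y\<in>B. (\<phi> y :: real)\<^sup>2)"
proof -
  have "(\<Sum>x\<in>A. (\<phi> (h x))\<^sup>2) = (\<Sum>y\<in>h ` A. (\<phi> y)\<^sup>2)"
    using sum.reindex[OF assms(1), of "\<lambda>y. (\<phi> y)\<^sup>2"] by simp
  also have "\<dots> \<le> (\<Sum>y\<in>B. (\<phi> y)\<^sup>2)"
    using assms by (intro sum_mono2) auto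
  finally show ?thesis .
qed

lemma sum_Suc_mult_power_le:
  fixes r :: real
  assumes "0 \<le> r" "r < 1"
  shows "(\<Sum>n\<le>N. real (Suc n) * r ^ n) \<le> 1 / (1 - r)\<^sup>2"
proof -
  have sums: "(\<lambda>n. real (Suc n) * r ^ n) sums (1 / (1 - r)\<^sup>2)"
    using geometric_deriv_sums[of r] assms by simp
  show ?thesis
    using sum_le_suminf[OF sums_summable[OF sums], of "{..N}"] sums_unique[OF sums] assms by simp
qed

lemma convergent_sum_incseq_finite:
  fixes f :: "'a \<Rightarrow> 'b::banach"
  assumes "incseq F" "\<And>N. finite (F N)" and bounded: "\<And>N. (\<Sum>x\<in>F N. norm (f x)) \<le> B"
  shows "convergent (\<lambda>N. \<Sum>x\<in>F N. f x)" and "norm (lim (\<lambda>N. \<Sum>x\<in>F N. f x)) \<le> B"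
proof -
  define S where "S N = (\<Sum>x\<in>F N. norm (f x))" for N
  have "S m \<le> S n" if "m \<le> n" for m n
    unfolding S_def using incseqD[OF assms(1) that] assms(2) by (intro sum_mono2) auto
  then have "incseq S" by (simp add: incseq_def)
  then have "Cauchy S"
    using bounded incseq_convergent[of S B] unfolding S_def by (blast intro: LIMSEQ_imp_Cauchy)
  have "dist (\<Sum>x\<in>F m. f x) (\<Sum>x\<in>F n. f x) \<le> dist (S m) (S n)" for m n
  proof -
    have *: "dist (\<Sum>x\<in>F m. f x) (\<Sum>x\<in>F n. f x) \<le> S n - S m" if "m \<le> n" for m n
    proof -
      have sub: "F m \<subseteq> F n" using assms(1) that by (rule incseqD)
      have "dist (\<Sum>x\<in>F m. f x) (\<Sum>x\<in>F n. f x) = norm (\<Sum>x\<in>F n - F m. f x)"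
        using sum_diff[OF assms(2) sub, of f] by (simp add: dist_norm norm_minus_commute)
      also have "\<dots> \<le> (\<Sum>x\<in>F n - F m. norm (f x))" by (rule norm_sum)
      also have "\<dots> = S n - S m"
        unfolding S_def using sum_diff[OF assms(2) sub, of "\<lambda>x. norm (f x)"] by simp
      finally show ?thesis .
    qed
    show ?thesis
      using *[of m n] *[of n m] by (cases "m \<le> n") (simp_all add: dist_real_def dist_commute)
  qed
  with \<open>Cauchy S\<close> have "Cauchy (\<lambda>N. \<Sum>x\<in>F N. f x)"
    unfolding Cauchy_def by (meson le_less_trans)
  then show conv: "convergent (\<lambda>N. \<Sum>x\<in>F N. f x)"
    by (simp add: Cauchy_convergent_iff)
  have "norm (\<Sum>x\<in>F N. f x) \<le> B" for N
    using norm_sum[of f "F N"] bounded[of N] by linarith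
  with conv show "norm (lim (\<lambda>N. \<Sum>x\<in>F N. f x)) \<le> B"
    by (intro LIMSEQ_le_const2[OF tendsto_norm]) (auto simp: convergent_LIMSEQ_iff)
qed

lemma power_powr_inverse:
  fixes X :: real
  assumes "0 \<le> X" "0 < p"
  shows "(X ^ p) powr (1 / real p) = X"
  using assms by (cases "X = 0") (simp_all add: powr_realpow[symmetric] powr_powr)

section \<open>Non-crossing pairings and stack runs\<close>

fun stack_runs :: "bool list \<Rightarrow> bool list \<Rightarrow> nat" where
  "stack_runs [] s = (if s = [] then 1 else 0)"
| "stack_runs (x # w) s = stack_runs w (x # s) +
     (case s of [] \<Rightarrow> 0 | y # s' \<Rightarrow> if y \<noteq> x then stack_runs w s' else 0)"

text \<open>The letter b is popped by the letter w ! j; before that, take j w must empty the part of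
  the stack pushed above b.\<close>

lemma stack_runs_Cons_stack:
  "stack_runs w (b # s) = (\<Sum>j<length w. if w ! j \<noteq> b
     then stack_runs (take j w) [] * stack_runs (drop (Suc j) w) s else 0)"
proof (induction "length w" arbitrary: w b s rule: less_induct)
  case less
  show ?case
  proof (cases w)
    case Nil
    then show ?thesis by simp
  next
    case (Cons y u)
    let ?L = "length u"
    let ?R = "\<lambda>i j. if u ! i \<noteq> y \<and> u ! j \<noteq> b then stack_runs (take i u) [] *
                 stack_runs (drop (Suc i) (take j u)) [] * stack_runs (drop (Suc j) u) s else 0"
    let ?g = "\<lambda>j. if w ! j \<noteq> b then stack_runs (take j w) [] * stack_runs (drop (Suc j) w) s else 0"
    have IH: "\<And>v b s. length v < length w \<Longrightarrow> stack_runs v (b # s) = (\<Sum>j<length v. if v ! j \<noteq> b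
        then stack_runs (take j v) [] * stack_runs (drop (Suc j) v) s else 0)"
      using less by blast
    have after: "stack_runs (drop (Suc i) u) (b # s) = (\<Sum>j\<in>{Suc i..<?L}. if u ! j \<noteq> b
        then stack_runs (drop (Suc i) (take j u)) [] * stack_runs (drop (Suc j) u) s else 0)" for i
      using IH[of "drop (Suc i) u" b s] Cons
        sum_splits_drop[of "\<lambda>l x r. if x \<noteq> b then stack_runs l [] * stack_runs r s else 0" "Suc i" u]
      by simp
    have before: "stack_runs (take (Suc j) w) [] = (\<Sum>i<j. if u ! i \<noteq> y
        then stack_runs (take i u) [] * stack_runs (drop (Suc i) (take j u)) [] else 0)"
      if "j < ?L" for j
    proof -
      have "stack_runs (take (Suc j) w) [] = stack_runs (take j u) [y]"
        using Cons by simp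
      then show ?thesis
        using IH[of "take j u" y "[]"] Cons that
          sum_splits_take[of j u "\<lambda>l x r. if x \<noteq> y then stack_runs l [] * stack_runs r [] else 0"]
        by simp
    qed
    have "stack_runs w (b # s) = stack_runs u (y # b # s) + ?g 0"
      using Cons by simp
    also have "stack_runs u (y # b # s) = (\<Sum>i<?L. if u ! i \<noteq> y
        then stack_runs (take i u) [] * stack_runs (drop (Suc i) u) (b # s) else 0)"
      using IH[of u y "b # s"] Cons by simp
    also have "\<dots> = (\<Sum>i<?L. \<Sum>j\<in>{Suc i..<?L}. ?R i j)"
      by (intro sum.cong refl) (simp add: after sum_distrib_left mult.assoc if_distrib cong: if_cong)
    also have "\<dots> = (\<Sum>j<?L. \<Sum>i<j. ?R i j)"
      by (rule sum_lessThan_nested_swap[symmetric])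
    also have "\<dots> = (\<Sum>j<?L. ?g (Suc j))"
    proof (intro sum.cong refl)
      fix j assume j: "j \<in> {..<?L}"
      have "w ! Suc j = u ! j" "drop (Suc (Suc j)) w = drop (Suc j) u"
        using Cons by simp_all
      then show "(\<Sum>i<j. ?R i j) = ?g (Suc j)"
        unfolding before[OF j[simplified]]
        by (cases "u ! j = b") (auto simp: sum_distrib_right intro!: sum.cong split: if_splits)
    qed
    finally show ?thesis
      using Cons by (simp only: sum.lessThan_Suc_shift length_Cons add.commute)
  qed
qed

lemma finite_nc_star_pairings: "finite (nc_star_pairings w)"
proof (rule finite_subset)
  show "nc_star_pairings w \<subseteq> Pow ({..<length w} \<times> {..<length w})"
    unfolding nc_star_pairings_def by auto
qed auto

lemma nc_star_pairing_less:
  "P \<in> nc_star_pairings w \<Longrightarrow> (a, b) \<in> P \<Longrightarrow> a < b \<and> b < length w"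
  unfolding nc_star_pairings_def by blast

lemma nc_star_pairing_letters:
  "P \<in> nc_star_pairings w \<Longrightarrow> (a, b) \<in> P \<Longrightarrow> w ! a \<noteq> w ! b"
  unfolding nc_star_pairings_def by blast

lemma nc_star_pairing_non_crossing:
  "P \<in> nc_star_pairings w \<Longrightarrow> (a, b) \<in> P \<Longrightarrow> (c, d) \<in> P \<Longrightarrow> \<not> (a < c \<and> c < b \<and> b < d)"
  unfolding nc_star_pairings_def by blast

lemma nc_star_pairing_covers:
  assumes "P \<in> nc_star_pairings w" "i < length w"
  obtains a b where "(a, b) \<in> P" "i = a \<or> i = b"
proof -
  have "\<exists>!q \<in> P. fst q = i \<or> snd q = i"
    using assms unfolding nc_star_pairings_def by blast
  then obtain q where "q \<in> P" "fst q = i \<or> snd q = i" by blast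
  then show ?thesis using that[of "fst q" "snd q"] by auto
qed

lemma nc_star_pairing_blocks_disjoint:
  assumes P: "P \<in> nc_star_pairings w" and "(a, b) \<in> P" "(c, d) \<in> P"
    and "i = a \<or> i = b" "i = c \<or> i = d"
  shows "(a, b) = (c, d)"
proof -
  have "i < length w"
    using nc_star_pairing_less[OF P \<open>(a, b) \<in> P\<close>] assms(4) by auto
  then have "\<exists>!q \<in> P. fst q = i \<or> snd q = i"
    using P unfolding nc_star_pairings_def by blast
  then obtain q where "\<And>q'. q' \<in> P \<Longrightarrow> fst q' = i \<or> snd q' = i \<Longrightarrow> q' = q" by blast
  then show ?thesis using assms(2-5) by (metis fst_conv snd_conv)
qed

lemma nc_star_pairingsI:
  assumes "\<And>a b. (a, b) \<in> P \<Longrightarrow> a < b \<and> b < length w"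
    and "\<And>i. i < length w \<Longrightarrow> \<exists>(a, b) \<in> P. i = a \<or> i = b"
    and "\<And>a b c d i. (a, b) \<in> P \<Longrightarrow> (c, d) \<in> P \<Longrightarrow> i = a \<or> i = b \<Longrightarrow> i = c \<or> i = d \<Longrightarrow> (a, b) = (c, d)"
    and "\<And>a b. (a, b) \<in> P \<Longrightarrow> w ! a \<noteq> w ! b"
    and "\<And>a b c d. (a, b) \<in> P \<Longrightarrow> (c, d) \<in> P \<Longrightarrow> \<not> (a < c \<and> c < b \<and> b < d)"
  shows "P \<in> nc_star_pairings w"
proof -
  have "\<exists>!q \<in> P. fst q = i \<or> snd q = i" if i: "i < length w" for i
  proof -
    obtain a b where ab: "(a, b) \<in> P" "i = a \<or> i = b" using assms(2)[OF i] by auto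
    show ?thesis
    proof (rule ex1I[of _ "(a, b)"])
      show "(a, b) \<in> P \<and> (fst (a, b) = i \<or> snd (a, b) = i)" using ab by auto
      fix q assume "q \<in> P \<and> (fst q = i \<or> snd q = i)"
      then show "q = (a, b)" using assms(3)[of "fst q" "snd q" a b i] ab by auto
    qed
  qed
  moreover have "P \<subseteq> {(i, j). i < j \<and> j < length w}" using assms(1) by auto
  ultimately show ?thesis
    unfolding nc_star_pairings_def using assms(4,5) by blast
qed

definition pairing_restrict :: "nat \<Rightarrow> nat \<Rightarrow> (nat \<times> nat) set \<Rightarrow> (nat \<times> nat) set" where
  "pairing_restrict k L P = (\<lambda>(a, b). (a - k, b - k)) ` {(a, b) \<in> P. k \<le> a \<and> b < k + L}"

lemma mem_pairing_restrict:
  assumes "P \<in> nc_star_pairings w"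
  shows "(c, d) \<in> pairing_restrict k L P \<longleftrightarrow> (c + k, d + k) \<in> P \<and> d < L"
proof
  assume "(c, d) \<in> pairing_restrict k L P"
  then obtain a b where "(a, b) \<in> P" "k \<le> a" "b < k + L" "c = a - k" "d = b - k"
    unfolding pairing_restrict_def by auto
  moreover have "a < b" using nc_star_pairing_less[OF assms \<open>(a, b) \<in> P\<close>] by blast
  ultimately show "(c + k, d + k) \<in> P \<and> d < L" by auto
next
  assume "(c + k, d + k) \<in> P \<and> d < L"
  then show "(c, d) \<in> pairing_restrict k L P"
    unfolding pairing_restrict_def by (intro image_eqI[of _ _ "(c + k, d + k)"]) auto
qed

lemma pairing_restrict_in_nc_star_pairings:
  assumes P: "P \<in> nc_star_pairings w" and len: "k + L \<le> length w"
    and closed: "\<And>a b. (a, b) \<in> P \<Longrightarrow> k \<le> a \<and> a < k + L \<or> k \<le> b \<and> b < k + L \<Longrightarrow>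
                   k \<le> a \<and> b < k + L"
  shows "pairing_restrict k L P \<in> nc_star_pairings (take L (drop k w))"
proof (rule nc_star_pairingsI)
  note mem = mem_pairing_restrict[OF P]
  have len_v: "length (take L (drop k w)) = L" using len by simp
  fix a b assume "(a, b) \<in> pairing_restrict k L P"
  then have abP: "(a + k, b + k) \<in> P" and "b < L" using mem by auto
  then show "a < b \<and> b < length (take L (drop k w))"
    using nc_star_pairing_less[OF P abP] len_v by simp
  show "take L (drop k w) ! a \<noteq> take L (drop k w) ! b"
    using nc_star_pairing_letters[OF P abP] nc_star_pairing_less[OF P abP] \<open>b < L\<close> len
    by (simp add: add.commute)
  fix c d assume "(c, d) \<in> pairing_restrict k L P"
  then have cdP: "(c + k, d + k) \<in> P" using mem by auto
  show "\<not> (a < c \<and> c < b \<and> b < d)"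
    using nc_star_pairing_non_crossing[OF P abP cdP] by simp
  fix i assume "i = a \<or> i = b" "i = c \<or> i = d"
  then have "(a + k, b + k) = (c + k, d + k)"
    by (intro nc_star_pairing_blocks_disjoint[OF P abP cdP, of "i + k"]) auto
  then show "(a, b) = (c, d)" by simp
next
  fix i assume "i < length (take L (drop k w))"
  then have i: "i < L" "i + k < length w" using len by auto
  obtain a b where ab: "(a, b) \<in> P" "i + k = a \<or> i + k = b"
    using nc_star_pairing_covers[OF P i(2)] by blast
  then have "k \<le> a \<and> b < k + L"
    using closed[OF ab(1)] i nc_star_pairing_less[OF P ab(1)] by auto
  then have "(a - k, b - k) \<in> pairing_restrict k L P"
    using mem_pairing_restrict[OF P, of "a - k" "b - k"] ab nc_star_pairing_less[OF P ab(1)] by auto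
  then show "\<exists>(a, b) \<in> pairing_restrict k L P. i = a \<or> i = b"
    using ab(2) by auto
qed

lemma nc_star_pairing_partner_of_first:
  assumes P: "P \<in> nc_star_pairings (x # w)"
  obtains j where "j < length w" "w ! j \<noteq> x" "(0, Suc j) \<in> P"
proof -
  obtain a b where ab: "(a, b) \<in> P" "0 = a \<or> 0 = b"
    using nc_star_pairing_covers[OF P, where i = 0] by auto
  with nc_star_pairing_less[OF P ab(1)] obtain j where "a = 0" "b = Suc j" "j < length w"
    by (cases b) auto
  moreover have "(x # w) ! a \<noteq> (x # w) ! b" by (rule nc_star_pairing_letters[OF P ab(1)])
  ultimately show ?thesis using that ab(1) by auto
qed

lemma nc_star_pairing_blocks_around_first:
  assumes P: "P \<in> nc_star_pairings (x # w)" and j: "(0, Suc j) \<in> P"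
    and ab: "(a, b) \<in> P" and ne: "(a, b) \<noteq> (0, Suc j)"
  shows "1 \<le> a \<and> b \<le> j \<or> j + 2 \<le> a"
proof -
  have "a \<noteq> 0"
  proof
    assume "a = 0"
    then have "(a, b) = (0, Suc j)"
      by (intro nc_star_pairing_blocks_disjoint[OF P ab j, of 0]) simp_all
    with ne show False ..
  qed
  moreover have "a \<noteq> Suc j \<and> b \<noteq> Suc j"
  proof (rule ccontr)
    assume "\<not> (a \<noteq> Suc j \<and> b \<noteq> Suc j)"
    then have "(a, b) = (0, Suc j)"
      by (intro nc_star_pairing_blocks_disjoint[OF P ab j, of "Suc j"]) auto
    with ne show False ..
  qed
  moreover have "\<not> (0 < a \<and> a < Suc j \<and> Suc j < b)"
    by (rule nc_star_pairing_non_crossing[OF P j ab])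
  ultimately show ?thesis
    using nc_star_pairing_less[OF P ab] by arith
qed

lemma nc_star_pairing_restrict_around_first:
  assumes P: "P \<in> nc_star_pairings (x # w)" and j: "(0, Suc j) \<in> P" "j < length w"
  shows "pairing_restrict 1 j P \<in> nc_star_pairings (take j w)"
    and "pairing_restrict (j + 2) (length w - Suc j) P \<in> nc_star_pairings (drop (Suc j) w)"
proof -
  have blocks: "(a, b) = (0, Suc j) \<or> 1 \<le> a \<and> b \<le> j \<or> j + 2 \<le> a" if "(a, b) \<in> P" for a b
    using nc_star_pairing_blocks_around_first[OF P j(1) that] by blast
  have "pairing_restrict 1 j P \<in> nc_star_pairings (take j (drop 1 (x # w)))"
    using j(2) nc_star_pairing_less[OF P] blocks
    by (intro pairing_restrict_in_nc_star_pairings[OF P]) fastforce+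
  then show "pairing_restrict 1 j P \<in> nc_star_pairings (take j w)" by simp
  have "pairing_restrict (j + 2) (length w - Suc j) P
      \<in> nc_star_pairings (take (length w - Suc j) (drop (j + 2) (x # w)))"
    using j(2) nc_star_pairing_less[OF P] blocks
    by (intro pairing_restrict_in_nc_star_pairings[OF P]) fastforce+
  then show "pairing_restrict (j + 2) (length w - Suc j) P \<in> nc_star_pairings (drop (Suc j) w)"
    by simp
qed

lemma nc_star_pairing_subset_by_restrict_around_first:
  assumes P1: "P1 \<in> nc_star_pairings (x # w)" and j1: "(0, Suc j) \<in> P1"
    and P2: "P2 \<in> nc_star_pairings (x # w)" and j2: "(0, Suc j) \<in> P2"
    and inner: "pairing_restrict 1 j P1 = pairing_restrict 1 j P2"
    and outer: "pairing_restrict (j + 2) L P1 = pairing_restrict (j + 2) L P2"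
    and L: "L = length w - Suc j"
  shows "P1 \<subseteq> P2"
proof clarify
  fix a b assume ab: "(a, b) \<in> P1"
  consider "(a, b) = (0, Suc j)" | "1 \<le> a \<and> b \<le> j" | "j + 2 \<le> a"
    using nc_star_pairing_blocks_around_first[OF P1 j1 ab] by blast
  then show "(a, b) \<in> P2"
  proof cases
    case 1
    then show ?thesis using j2 by simp
  next
    case 2
    then obtain c d where cd: "a = c + 1" "b = d + 1" "d < j"
      using nc_star_pairing_less[OF P1 ab] by (intro that[of "a - 1" "b - 1"]) auto
    then have "(c, d) \<in> pairing_restrict 1 j P2"
      using inner mem_pairing_restrict[OF P1] ab by auto
    then show ?thesis
      using mem_pairing_restrict[OF P2] cd by auto
  next
    case 3
    then obtain c d where cd: "a = c + (j + 2)" "b = d + (j + 2)" "d < L"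
      using nc_star_pairing_less[OF P1 ab] L
      by (intro that[of "a - (j + 2)" "b - (j + 2)"]) auto
    then have "(c, d) \<in> pairing_restrict (j + 2) L P2"
      using outer mem_pairing_restrict[OF P1] ab by auto
    then show ?thesis
      using mem_pairing_restrict[OF P2] cd by auto
  qed
qed

lemma card_nc_star_pairings_with_partner_le:
  assumes "j < length w"
  shows "card {P \<in> nc_star_pairings (x # w). (0, Suc j) \<in> P}
    \<le> card (nc_star_pairings (take j w)) * card (nc_star_pairings (drop (Suc j) w))"
proof -
  let ?S = "{P \<in> nc_star_pairings (x # w). (0, Suc j) \<in> P}"
  let ?split = "\<lambda>P. (pairing_restrict 1 j P, pairing_restrict (j + 2) (length w - Suc j) P)"
  have "card ?S \<le> card (nc_star_pairings (take j w) \<times> nc_star_pairings (drop (Suc j) w))"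
  proof (rule card_inj_on_le[of ?split])
    show "inj_on ?split ?S"
    proof (rule inj_onI)
      fix P1 P2 assume S: "P1 \<in> ?S" "P2 \<in> ?S" and eq: "?split P1 = ?split P2"
      from eq have inner: "pairing_restrict 1 j P1 = pairing_restrict 1 j P2"
        and outer: "pairing_restrict (j + 2) (length w - Suc j) P1
                  = pairing_restrict (j + 2) (length w - Suc j) P2"
        by simp_all
      show "P1 = P2"
      proof
        show "P1 \<subseteq> P2"
          using S by (intro nc_star_pairing_subset_by_restrict_around_first[OF _ _ _ _ inner outer refl]) auto
        show "P2 \<subseteq> P1"
          using S by (intro nc_star_pairing_subset_by_restrict_around_first[OF _ _ _ _
                inner[symmetric] outer[symmetric] refl]) auto
      qed
    qed
    show "?split ` ?S \<subseteq> nc_star_pairings (take j w) \<times> nc_star_pairings (drop (Suc j) w)"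
      using nc_star_pairing_restrict_around_first assms by auto
  qed (simp add: finite_nc_star_pairings)
  then show ?thesis by (simp add: card_cartesian_product)
qed

lemma card_nc_star_pairings_Cons_le:
  "card (nc_star_pairings (x # w)) \<le> (\<Sum>j<length w. if w ! j \<noteq> x
     then card (nc_star_pairings (take j w)) * card (nc_star_pairings (drop (Suc j) w)) else 0)"
proof -
  let ?J = "{j. j < length w \<and> w ! j \<noteq> x}"
  let ?S = "\<lambda>j. {P \<in> nc_star_pairings (x # w). (0, Suc j) \<in> P}"
  have "nc_star_pairings (x # w) \<subseteq> (\<Union>j\<in>?J. ?S j)"
  proof
    fix P assume P: "P \<in> nc_star_pairings (x # w)"
    then obtain j where "j < length w" "w ! j \<noteq> x" "(0, Suc j) \<in> P"
      by (rule nc_star_pairing_partner_of_first)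
    with P show "P \<in> (\<Union>j\<in>?J. ?S j)" by blast
  qed
  then have "card (nc_star_pairings (x # w)) \<le> card (\<Union>j\<in>?J. ?S j)"
    by (rule card_mono[rotated]) (simp add: finite_nc_star_pairings)
  also have "\<dots> \<le> (\<Sum>j\<in>?J. card (?S j))"
    by (rule card_UN_le) simp
  also have "\<dots> \<le> (\<Sum>j\<in>?J. card (nc_star_pairings (take j w)) * card (nc_star_pairings (drop (Suc j) w)))"
    by (intro sum_mono card_nc_star_pairings_with_partner_le) simp
  also have "\<dots> = (\<Sum>j<length w. if w ! j \<noteq> x
      then card (nc_star_pairings (take j w)) * card (nc_star_pairings (drop (Suc j) w)) else 0)"
    by (simp add: sum.If_cases lessThan_def Collect_conj_eq Int_commute)
  finally show ?thesis .
qed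

lemma card_nc_star_pairings_le_stack_runs:
  "card (nc_star_pairings w) \<le> stack_runs w []"
proof (induction "length w" arbitrary: w rule: less_induct)
  case less
  show ?case
  proof (cases w)
    case Nil
    have "nc_star_pairings [] \<subseteq> {{}}"
      unfolding nc_star_pairings_def by auto
    then show ?thesis
      using Nil card_mono[of "{{}}" "nc_star_pairings []"] by simp
  next
    case (Cons x u)
    have "card (nc_star_pairings w) \<le> (\<Sum>j<length u. if u ! j \<noteq> x
        then card (nc_star_pairings (take j u)) * card (nc_star_pairings (drop (Suc j) u)) else 0)"
      using card_nc_star_pairings_Cons_le Cons by simp
    also have "\<dots> \<le> (\<Sum>j<length u. if u ! j \<noteq> x
        then stack_runs (take j u) [] * stack_runs (drop (Suc j) u) [] else 0)"
      using less Cons by (auto intro!: sum_mono mult_le_mono)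
    also have "\<dots> = stack_runs w []"
      using Cons by (simp add: stack_runs_Cons_stack)
    finally show ?thesis .
  qed
qed

definition word_block :: "nat \<times> nat \<Rightarrow> bool list" where
  "word_block = (\<lambda>(n, m). replicate n True @ replicate m False)"

lemma stack_runs_replicate_True:
  "stack_runs (replicate n True @ v) (replicate k True) = stack_runs v (replicate (n + k) True)"
proof (induction n arbitrary: k)
  case (Suc n)
  have "stack_runs (replicate (Suc n) True @ v) (replicate k True)
      = stack_runs (replicate n True @ v) (replicate (Suc k) True)"
    by (cases k) auto
  then show ?case using Suc.IH[of "Suc k"] by simp
qed simp

lemma stack_runs_replicate_False:
  "stack_runs (replicate m False) (replicate k True) = (if m = k then 1 else 0)"
proof -
  have pushed: "stack_runs (replicate m False) (False # s) = 0" for m s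
    by (induction m arbitrary: s) auto
  show ?thesis
  proof (induction m arbitrary: k)
    case (Suc m)
    then show ?case by (cases k) (simp_all add: pushed)
  qed simp
qed

lemma card_nc_star_pairings_word_block:
  "card (nc_star_pairings (word_block (n, m))) = (if n = m then 1 else 0)"
proof -
  have le: "card (nc_star_pairings (word_block (n, m))) \<le> (if n = m then 1 else 0)"
    using card_nc_star_pairings_le_stack_runs[of "word_block (n, m)"]
      stack_runs_replicate_True[of n "replicate m False" 0] stack_runs_replicate_False[of m n]
    by (cases "n = m") (simp_all add: word_block_def)
  let ?P = "{(i, 2 * n - 1 - i) | i. i < n}"
  have "?P \<in> nc_star_pairings (word_block (n, n))"
  proof (rule nc_star_pairingsI)
    fix i assume i: "i < length (word_block (n, n))"
    show "\<exists>(a, b) \<in> ?P. i = a \<or> i = b"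
    proof (cases "i < n")
      case False
      then have "(2 * n - 1 - i, i) \<in> ?P"
        using i by (auto simp: word_block_def intro!: exI[of _ "2 * n - 1 - i"])
      then show ?thesis by auto
    qed auto
  qed (auto simp: word_block_def nth_append)
  then have "card (nc_star_pairings (word_block (n, n))) \<noteq> 0"
    using finite_nc_star_pairings by (auto simp: card_eq_0_iff)
  then show ?thesis using le by (cases "n = m") auto
qed

section \<open>Stack operators and a Haagerup inequality\<close>

definition stack_op :: "bool \<Rightarrow> (bool list \<Rightarrow> real) \<Rightarrow> bool list \<Rightarrow> real" where
  "stack_op x \<phi> s = \<phi> (x # s) + (case s of [] \<Rightarrow> 0 | y # s' \<Rightarrow> if y \<noteq> x then \<phi> s' else 0)"

definition vacuum :: "bool list \<Rightarrow> real" where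
  "vacuum s = (if s = [] then 1 else 0)"

lemma stack_runs_eq_foldr_stack_op: "real (stack_runs w s) = foldr stack_op w vacuum s"
proof (induction w arbitrary: s)
  case Nil
  then show ?case by (simp add: vacuum_def)
next
  case (Cons x w)
  then show ?case by (cases s) (auto simp: stack_op_def)
qed

lemma stack_op_sum:
  "finite I \<Longrightarrow> stack_op x (\<lambda>s. \<Sum>i\<in>I. c i * g i s) s = (\<Sum>i\<in>I. c i * stack_op x (g i) s)"
  unfolding stack_op_def by (cases s) (auto simp: sum.distrib sum_distrib_left algebra_simps)

lemma stack_op_power_sum:
  assumes "finite I"
  shows "(stack_op x ^^ n) (\<lambda>s. \<Sum>i\<in>I. c i * g i s) s = (\<Sum>i\<in>I. c i * (stack_op x ^^ n) (g i) s)"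
proof (induction n arbitrary: s)
  case (Suc n)
  then have "(stack_op x ^^ n) (\<lambda>s. \<Sum>i\<in>I. c i * g i s) = (\<lambda>s. \<Sum>i\<in>I. c i * (stack_op x ^^ n) (g i) s)"
    by auto
  then show ?case
    using stack_op_sum[OF assms, of x c "\<lambda>i. (stack_op x ^^ n) (g i)" s] by simp
qed simp

text \<open>The j-th term of the n-th power pops j letters \<not> x off the stack and then pushes n - j
  letters x; the predicate P restricts the remaining stack.\<close>

definition pop_push_term ::
    "bool \<Rightarrow> nat \<Rightarrow> nat \<Rightarrow> (bool list \<Rightarrow> bool) \<Rightarrow> (bool list \<Rightarrow> real) \<Rightarrow> bool list \<Rightarrow> real" where
  "pop_push_term x n j P \<phi> s = (if s = replicate j (\<not> x) @ drop j s \<and> P (drop j s)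
     then \<phi> (replicate (n - j) x @ drop j s) else 0)"

lemma stack_op_power:
  "(stack_op x ^^ n) \<phi> s = (\<Sum>j\<le>n. pop_push_term x n j (\<lambda>_. True) \<phi> s)"
proof (induction n arbitrary: s)
  case 0
  then show ?case by (simp add: pop_push_term_def)
next
  case (Suc n)
  have push: "(stack_op x ^^ n) \<phi> (x # s) = \<phi> (replicate (Suc n) x @ s)"
    using Suc.IH[of "x # s"] by (simp add: sum.atMost_shift pop_push_term_def replicate_app_Cons_same)
  have pop: "(case s of [] \<Rightarrow> 0 | y # s' \<Rightarrow> if y \<noteq> x then (stack_op x ^^ n) \<phi> s' else 0)
      = (\<Sum>j\<le>n. pop_push_term x (Suc n) (Suc j) (\<lambda>_. True) \<phi> s)"
  proof (cases s)
    case (Cons y s')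
    show ?thesis
    proof (cases "y = x")
      case False
      then have "y = (\<not> x)" by auto
      then have "pop_push_term x (Suc n) (Suc j) (\<lambda>_. True) \<phi> s = pop_push_term x n j (\<lambda>_. True) \<phi> s'"
        for j using Cons by (simp add: pop_push_term_def)
      then show ?thesis
        using Cons False Suc.IH[of s'] by simp
    qed (use Cons in \<open>simp add: pop_push_term_def\<close>)
  qed (simp add: pop_push_term_def)
  have "(stack_op x ^^ Suc n) \<phi> s = (stack_op x ^^ n) \<phi> (x # s)
      + (case s of [] \<Rightarrow> 0 | y # s' \<Rightarrow> if y \<noteq> x then (stack_op x ^^ n) \<phi> s' else 0)"
    by (simp add: stack_op_def)
  also have "\<dots> = (\<Sum>j\<le>Suc n. pop_push_term x (Suc n) j (\<lambda>_. True) \<phi> s)"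
    unfolding push pop sum.atMost_Suc_shift by (simp add: pop_push_term_def)
  finally show ?case .
qed

definition stacks_upto :: "nat \<Rightarrow> bool list set" where
  "stacks_upto D = {s. length s \<le> D}"

lemma finite_stacks_upto [simp]: "finite (stacks_upto D)"
  using finite_lists_length_le[of "UNIV :: bool set" D] by (simp add: stacks_upto_def)

lemma L2_set_stacks_upto_mono: "D \<le> D' \<Longrightarrow> L2_set f (stacks_upto D) \<le> L2_set f (stacks_upto D')"
  by (intro L2_set_subset_mono[OF finite_stacks_upto]) (auto simp: stacks_upto_def)

lemma pop_push_image_subset:
  "(\<lambda>u. replicate (n - j) x @ u) ` {u. P u \<and> length u \<le> D} \<subseteq> stacks_upto (D + n)"
  by (auto simp: stacks_upto_def)

lemma power2_L2_pop_push_term_le: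
  "(L2_set (pop_push_term x n j P \<phi>) (stacks_upto D))\<^sup>2
     \<le> (\<Sum>v\<in>(\<lambda>u. replicate (n - j) x @ u) ` {u. P u \<and> length u \<le> D}. (\<phi> v)\<^sup>2)"
proof -
  let ?A = "{s \<in> stacks_upto D. s = replicate j (\<not> x) @ drop j s \<and> P (drop j s)}"
  let ?h = "\<lambda>s. replicate (n - j) x @ drop j s"
  have "(L2_set (pop_push_term x n j P \<phi>) (stacks_upto D))\<^sup>2 = (\<Sum>s\<in>stacks_upto D.
      if s = replicate j (\<not> x) @ drop j s \<and> P (drop j s) then (\<phi> (?h s))\<^sup>2 else 0)"
    by (simp only: power2_L2_set pop_push_term_def if_distrib[of "\<lambda>z. z\<^sup>2"] power_zero_numeral)
  also have "\<dots> = (\<Sum>s\<in>?A. (\<phi> (?h s))\<^sup>2)"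
    by (rule sum.inter_filter[symmetric]) simp
  also have "\<dots> \<le> (\<Sum>v\<in>(\<lambda>u. replicate (n - j) x @ u) ` {u. P u \<and> length u \<le> D}. (\<phi> v)\<^sup>2)"
  proof (rule sum_power2_reindex_le)
    show "inj_on ?h ?A"
    proof (rule inj_onI)
      fix s t assume "s \<in> ?A" "t \<in> ?A" and "?h s = ?h t"
      then have "s = replicate j (\<not> x) @ drop j s" "t = replicate j (\<not> x) @ drop j t"
        by blast+
      moreover from \<open>?h s = ?h t\<close> have "drop j s = drop j t" by simp
      ultimately show "s = t" by metis
    qed
    show "?h ` ?A \<subseteq> (\<lambda>u. replicate (n - j) x @ u) ` {u. P u \<and> length u \<le> D}"
    proof
      fix v assume "v \<in> ?h ` ?A"
      then obtain s where "v = ?h s" "P (drop j s)" "length s \<le> D"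
        unfolding stacks_upto_def by blast
      then show "v \<in> (\<lambda>u. replicate (n - j) x @ u) ` {u. P u \<and> length u \<le> D}"
        by (intro image_eqI[of _ _ "drop j s"]) auto
    qed
    show "finite ((\<lambda>u. replicate (n - j) x @ u) ` {u. P u \<and> length u \<le> D})"
      using finite_subset[OF pop_push_image_subset finite_stacks_upto] .
  qed
  finally show ?thesis .
qed

lemma takeWhile_replicate_append:
  "\<not> (u \<noteq> [] \<and> hd u = x) \<Longrightarrow> takeWhile (\<lambda>c. c = x) (replicate k x @ u) = replicate k x"
  by (induction k) (cases u, auto)

lemma hd_drop_replicate_prefix:
  assumes "s = replicate j y @ drop j s" "i < j" "drop i s \<noteq> []"
  shows "hd (drop i s) = y"
proof -
  have "s ! i = (replicate j y @ drop j s) ! i" using assms(1) by (rule arg_cong)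
  then show ?thesis using assms(2,3) by (simp add: hd_drop_conv_nth nth_append)
qed

lemma pop_push_terms_orthogonal:
  assumes "i \<noteq> j"
  shows "pop_push_term x n i (\<lambda>u. u \<noteq> [] \<and> hd u = x) \<phi> s
       * pop_push_term x n j (\<lambda>u. u \<noteq> [] \<and> hd u = x) \<phi> s = 0"
  using assms hd_drop_replicate_prefix[of s j "\<not> x" i] hd_drop_replicate_prefix[of s i "\<not> x" j]
  unfolding pop_push_term_def by (cases "i < j") auto

text \<open>When the stack left after the pops is not topped by x, the leading run of x of the result
  has length exactly n - j, so these terms have disjoint images; the other terms have disjoint
  supports. Each of the two halves thus costs only sqrt (n + 1) instead of n + 1.\<close>

lemma L2_sum_pop_push_terms_disjoint_images_le:
  "L2_set (\<lambda>s. \<Sum>j\<le>n. pop_push_term x n j (\<lambda>u. \<not> (u \<noteq> [] \<and> hd u = x)) \<phi> s) (stacks_upto D)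
     \<le> sqrt (real n + 1) * L2_set \<phi> (stacks_upto (D + n))"
proof -
  let ?P = "\<lambda>u. \<not> (u \<noteq> [] \<and> hd u = x)"
  let ?T = "\<lambda>j. (\<lambda>u. replicate (n - j) x @ u) ` {u. ?P u \<and> length u \<le> D}"
  have disj: "?T i \<inter> ?T j = {}" if "i \<le> n" "j \<le> n" "i \<noteq> j" for i j
  proof (rule ccontr)
    assume "?T i \<inter> ?T j \<noteq> {}"
    then obtain u u' where "?P u" "?P u'" and "replicate (n - i) x @ u = replicate (n - j) x @ u'"
      by blast
    then have "replicate (n - i) x = replicate (n - j) x"
      using takeWhile_replicate_append[of u x "n - i"] takeWhile_replicate_append[of u' x "n - j"]
      by metis
    then show False using that by simp
  qed
  have "(\<Sum>j\<le>n. (L2_set (pop_push_term x n j ?P \<phi>) (stacks_upto D))\<^sup>2) \<le> (\<Sum>j\<le>n. \<Sum>v\<in>?T j. (\<phi> v)\<^sup>2)"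
    by (intro sum_mono power2_L2_pop_push_term_le)
  also have "\<dots> = (\<Sum>v\<in>(\<Union>j\<le>n. ?T j). (\<phi> v)\<^sup>2)"
    using disj finite_subset[OF pop_push_image_subset finite_stacks_upto]
    by (intro sum.UNION_disjoint[symmetric]) auto
  also have "\<dots> \<le> (L2_set \<phi> (stacks_upto (D + n)))\<^sup>2"
    unfolding power2_L2_set
    by (intro sum_mono2 finite_stacks_upto UN_least pop_push_image_subset) simp
  finally have sqrt_le: "sqrt (\<Sum>j\<le>n. (L2_set (pop_push_term x n j ?P \<phi>) (stacks_upto D))\<^sup>2)
      \<le> L2_set \<phi> (stacks_upto (D + n))"
    by (simp add: real_le_lsqrt)
  have card: "real (card {..n}) = real n + 1" by simp
  have "L2_set (\<lambda>s. \<Sum>j\<le>n. pop_push_term x n j ?P \<phi> s) (stacks_upto D)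
      \<le> sqrt (real (card {..n})) * sqrt (\<Sum>j\<le>n. (L2_set (pop_push_term x n j ?P \<phi>) (stacks_upto D))\<^sup>2)"
    by (rule L2_set_sum_le_sqrt_card) simp
  also have "\<dots> \<le> sqrt (real n + 1) * L2_set \<phi> (stacks_upto (D + n))"
    unfolding card by (rule mult_left_mono[OF sqrt_le]) simp
  finally show ?thesis .
qed

lemma L2_sum_pop_push_terms_disjoint_supports_le:
  "L2_set (\<lambda>s. \<Sum>j\<le>n. pop_push_term x n j (\<lambda>u. u \<noteq> [] \<and> hd u = x) \<phi> s) (stacks_upto D)
     \<le> sqrt (real n + 1) * L2_set \<phi> (stacks_upto (D + n))"
proof (rule power2_le_imp_le)
  let ?P = "\<lambda>u. u \<noteq> [] \<and> hd u = x"
  have "(L2_set (\<lambda>s. \<Sum>j\<le>n. pop_push_term x n j ?P \<phi> s) (stacks_upto D))\<^sup>2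
      = (\<Sum>j\<le>n. (L2_set (pop_push_term x n j ?P \<phi>) (stacks_upto D))\<^sup>2)"
    by (rule power2_L2_set_sum_orthogonal) (simp_all add: pop_push_terms_orthogonal)
  also have "\<dots> \<le> (\<Sum>j\<le>n. (L2_set \<phi> (stacks_upto (D + n)))\<^sup>2)"
    by (intro sum_mono order_trans[OF power2_L2_pop_push_term_le])
      (unfold power2_L2_set, intro sum_mono2[OF finite_stacks_upto pop_push_image_subset], simp)
  finally show "(L2_set (\<lambda>s. \<Sum>j\<le>n. pop_push_term x n j ?P \<phi> s) (stacks_upto D))\<^sup>2
      \<le> (sqrt (real n + 1) * L2_set \<phi> (stacks_upto (D + n)))\<^sup>2"
    by (simp add: power_mult_distrib add.commute)
qed simp

lemma L2_stack_op_power_le: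
  "L2_set ((stack_op x ^^ n) \<phi>) (stacks_upto D) \<le> 2 * sqrt (real n + 1) * L2_set \<phi> (stacks_upto (D + n))"
proof -
  let ?top = "\<lambda>u. u \<noteq> [] \<and> hd u = x"
  let ?images = "\<lambda>s. \<Sum>j\<le>n. pop_push_term x n j (\<lambda>u. \<not> ?top u) \<phi> s"
  let ?supports = "\<lambda>s. \<Sum>j\<le>n. pop_push_term x n j ?top \<phi> s"
  have "(stack_op x ^^ n) \<phi> = (\<lambda>s. ?images s + ?supports s)"
    unfolding stack_op_power sum.distrib[symmetric]
    by (intro ext sum.cong refl) (simp add: pop_push_term_def)
  then show ?thesis
    using L2_set_triangle_ineq[of ?images ?supports "stacks_upto D"]
      L2_sum_pop_push_terms_disjoint_images_le[where x = x and n = n and \<phi> = \<phi> and D = D]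
      L2_sum_pop_push_terms_disjoint_supports_le[where x = x and n = n and \<phi> = \<phi> and D = D]
    by simp
qed

definition series_op :: "bool \<Rightarrow> (nat \<Rightarrow> real) \<Rightarrow> nat \<Rightarrow> (bool list \<Rightarrow> real) \<Rightarrow> bool list \<Rightarrow> real" where
  "series_op x b N \<phi> = (\<lambda>s. \<Sum>n\<le>N. b n * (stack_op x ^^ n) \<phi> s)"

definition series_op_bound :: "(nat \<Rightarrow> real) \<Rightarrow> nat \<Rightarrow> real" where
  "series_op_bound b N = (\<Sum>n\<le>N. \<bar>b n\<bar> * (2 * sqrt (real n + 1)))"

lemma series_op_bound_nonneg: "0 \<le> series_op_bound b N"
  unfolding series_op_bound_def by (intro sum_nonneg) simp

lemma L2_series_op_le:
  "L2_set (series_op x b N \<phi>) (stacks_upto D) \<le> series_op_bound b N * L2_set \<phi> (stacks_upto (D + N))"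
proof -
  have "L2_set (series_op x b N \<phi>) (stacks_upto D)
      \<le> (\<Sum>n\<le>N. L2_set (\<lambda>s. b n * (stack_op x ^^ n) \<phi> s) (stacks_upto D))"
    unfolding series_op_def by (rule L2_set_sum_le) simp
  also have "\<dots> \<le> (\<Sum>n\<le>N. \<bar>b n\<bar> * (2 * sqrt (real n + 1)) * L2_set \<phi> (stacks_upto (D + N)))"
  proof (rule sum_mono)
    fix n assume n: "n \<in> {..N}"
    have "L2_set (\<lambda>s. b n * (stack_op x ^^ n) \<phi> s) (stacks_upto D)
        = \<bar>b n\<bar> * L2_set ((stack_op x ^^ n) \<phi>) (stacks_upto D)"
      unfolding L2_set_def by (simp add: power_mult_distrib real_sqrt_mult sum_distrib_left[symmetric])
    also have "\<dots> \<le> \<bar>b n\<bar> * (2 * sqrt (real n + 1) * L2_set \<phi> (stacks_upto (D + n)))"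
      by (intro mult_left_mono L2_stack_op_power_le) simp
    also have "\<dots> \<le> \<bar>b n\<bar> * (2 * sqrt (real n + 1) * L2_set \<phi> (stacks_upto (D + N)))"
      using n by (intro mult_left_mono L2_set_stacks_upto_mono) auto
    finally show "L2_set (\<lambda>s. b n * (stack_op x ^^ n) \<phi> s) (stacks_upto D)
        \<le> \<bar>b n\<bar> * (2 * sqrt (real n + 1)) * L2_set \<phi> (stacks_upto (D + N))"
      by (simp add: mult.assoc)
  qed
  finally show ?thesis
    by (simp add: series_op_bound_def sum_distrib_right)
qed

section \<open>Moments as vacuum coefficients\<close>

definition index_lists :: "nat \<Rightarrow> nat \<Rightarrow> (nat \<times> nat) list set" where
  "index_lists N k = {xs. set xs \<subseteq> {..N} \<times> {..N} \<and> length xs = k}"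

lemma finite_index_lists: "finite (index_lists N k)"
  unfolding index_lists_def by (rule finite_lists_length_eq) simp

lemma index_lists_mono: "N \<le> N' \<Longrightarrow> index_lists N k \<subseteq> index_lists N' k"
  unfolding index_lists_def by auto

lemma sum_index_lists_Suc:
  "(\<Sum>xs\<in>index_lists N (Suc k). f xs) = (\<Sum>p\<in>{..N} \<times> {..N}. \<Sum>ys\<in>index_lists N k. f (p # ys))"
proof -
  have eq: "index_lists N (Suc k) = (\<lambda>(p, xs). p # xs) ` (({..N} \<times> {..N}) \<times> index_lists N k)"
    unfolding index_lists_def by (auto simp: length_Suc_conv image_iff)
  have "inj_on (\<lambda>(p, xs). p # xs) (({..N} \<times> {..N}) \<times> index_lists N k)"
    by (rule inj_onI) auto
  then show ?thesis
    unfolding eq by (simp add: sum.reindex sum.cartesian_product split_def)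
qed

definition moment_vector :: "(nat \<Rightarrow> real) \<Rightarrow> nat \<Rightarrow> nat \<Rightarrow> bool list \<Rightarrow> real" where
  "moment_vector b N k = ((\<lambda>\<phi>. series_op True b N (series_op False b N \<phi>)) ^^ k) vacuum"

lemma sum_index_lists_stack_runs_eq_moment_vector:
  "(\<Sum>nms\<in>index_lists N k. (\<Prod>(n, m)\<leftarrow>nms. b n * b m) * real (stack_runs (concat (map word_block nms)) s))
     = moment_vector b N k s"
proof (induction k arbitrary: s)
  case 0
  have "index_lists N 0 = {[]}" unfolding index_lists_def by auto
  then show ?case by (simp add: moment_vector_def stack_runs_eq_foldr_stack_op vacuum_def)
next
  case (Suc k)
  let ?R = "\<lambda>ys s. real (stack_runs (concat (map word_block ys)) s)"
  let ?w = "\<lambda>ys. \<Prod>(n, m)\<leftarrow>ys. b n * b m"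
  have IH: "(\<lambda>s. \<Sum>ys\<in>index_lists N k. ?w ys * ?R ys s) = moment_vector b N k"
    using Suc.IH by auto
  have step: "?R (p # ys) s = (stack_op True ^^ fst p) ((stack_op False ^^ snd p) (?R ys)) s" for p ys s
    unfolding stack_runs_eq_foldr_stack_op by (simp add: word_block_def foldr_replicate split_def)
  have inner: "(\<Sum>ys\<in>index_lists N k. ?w ys * (stack_op True ^^ n) ((stack_op False ^^ m) (?R ys)) s)
      = (stack_op True ^^ n) ((stack_op False ^^ m) (moment_vector b N k)) s" for n m
  proof -
    have "(\<lambda>s'. \<Sum>ys\<in>index_lists N k. ?w ys * (stack_op False ^^ m) (?R ys) s')
        = (stack_op False ^^ m) (moment_vector b N k)"
      unfolding IH[symmetric] by (intro ext) (rule stack_op_power_sum[symmetric, OF finite_index_lists])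
    then show ?thesis
      using stack_op_power_sum[OF finite_index_lists[of N k], where x = True and n = n and c = ?w
          and g = "\<lambda>ys. (stack_op False ^^ m) (?R ys)" and s = s]
      by simp
  qed
  have "(\<Sum>nms\<in>index_lists N (Suc k). ?w nms * ?R nms s) = (\<Sum>p\<in>{..N} \<times> {..N}. b (fst p) * b (snd p) *
      (\<Sum>ys\<in>index_lists N k. ?w ys * (stack_op True ^^ fst p) ((stack_op False ^^ snd p) (?R ys)) s))"
    unfolding sum_index_lists_Suc step by (simp add: sum_distrib_left split_def mult_ac)
  also have "\<dots> = (\<Sum>p\<in>{..N} \<times> {..N}. b (fst p) * b (snd p) *
      (stack_op True ^^ fst p) ((stack_op False ^^ snd p) (moment_vector b N k)) s)"
    unfolding inner ..
  also have "\<dots> = (\<Sum>n\<le>N. \<Sum>m\<le>N. b n * (b m *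
      (stack_op True ^^ n) ((stack_op False ^^ m) (moment_vector b N k)) s))"
    by (simp add: sum.cartesian_product split_def mult.assoc)
  also have "\<dots> = series_op True b N (series_op False b N (moment_vector b N k)) s"
    unfolding series_op_def
    by (simp add: stack_op_power_sum sum_distrib_left)
  finally show ?case by (simp add: moment_vector_def)
qed

lemma stack_op_power_Nil: "(stack_op x ^^ n) \<phi> [] = \<phi> (replicate n x)"
  unfolding stack_op_power by (simp add: sum.atMost_shift pop_push_term_def)

lemma stack_op_False_power_vacuum:
  "(stack_op False ^^ m) vacuum s = (if s = replicate m True then 1 else 0)"
proof -
  have summand: "pop_push_term False m j (\<lambda>_. True) vacuum s = (if j = m \<and> s = replicate m True then 1 else 0)"
    if "j \<le> m" for j
  proof (cases "j = m \<and> s = replicate m True")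
    case False
    with that show ?thesis
      unfolding pop_push_term_def vacuum_def by (auto simp: append_eq_conv_conj)
  qed (simp add: pop_push_term_def vacuum_def)
  have "(stack_op False ^^ m) vacuum s = (\<Sum>j\<le>m. if j = m \<and> s = replicate m True then 1 else 0)"
    unfolding stack_op_power by (intro sum.cong refl) (simp add: summand)
  then show ?thesis by simp
qed

lemma L2_series_op_False_vacuum_le:
  "L2_set (series_op False b N vacuum) (stacks_upto D) \<le> L2_set b {..N}"
proof -
  let ?R = "{s. s = replicate (length s) True \<and> length s \<le> N}"
  have "series_op False b N vacuum s
      = (\<Sum>n\<le>N. if n = length s then (if s = replicate (length s) True then b n else 0) else 0)" for s
    unfolding series_op_def stack_op_False_power_vacuum by (intro sum.cong refl) auto
  then have "(series_op False b N vacuum s)\<^sup>2 = (if s \<in> ?R then (b (length s))\<^sup>2 else 0)" for s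
    by (simp add: sum.delta)
  then have "(\<Sum>s\<in>stacks_upto D. (series_op False b N vacuum s)\<^sup>2) = (\<Sum>s\<in>stacks_upto D \<inter> ?R. (b (length s))\<^sup>2)"
    by (simp add: sum.inter_restrict)
  also have "\<dots> \<le> (\<Sum>n\<in>{..N}. (b n)\<^sup>2)"
  proof (rule sum_power2_reindex_le)
    show "inj_on length (stacks_upto D \<inter> ?R)"
      by (rule inj_onI) (metis (mono_tags, lifting) Int_iff mem_Collect_eq)
  qed auto
  finally show ?thesis
    unfolding L2_set_def by (rule real_sqrt_le_mono)
qed

lemma L2_series_op_False_moment_vector_le:
  "L2_set (series_op False b N (moment_vector b N k)) (stacks_upto D)
     \<le> series_op_bound b N ^ (2 * k) * L2_set b {..N}"
proof (induction k arbitrary: D)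
  case 0
  then show ?case using L2_series_op_False_vacuum_le by (simp add: moment_vector_def)
next
  case (Suc k)
  let ?K = "series_op_bound b N"
  have "L2_set (series_op False b N (moment_vector b N (Suc k))) (stacks_upto D)
      \<le> ?K * L2_set (moment_vector b N (Suc k)) (stacks_upto (D + N))"
    by (rule L2_series_op_le)
  also have "\<dots> \<le> ?K * (?K * L2_set (series_op False b N (moment_vector b N k)) (stacks_upto (D + N + N)))"
    unfolding moment_vector_def funpow.simps o_apply
    by (intro mult_left_mono L2_series_op_le series_op_bound_nonneg)
  also have "\<dots> \<le> ?K * (?K * (?K ^ (2 * k) * L2_set b {..N}))"
    by (intro mult_left_mono Suc.IH series_op_bound_nonneg)
  finally show ?case by (simp add: mult_ac power_add)
qed

lemma abs_moment_vector_Nil_le: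
  "\<bar>moment_vector b N (Suc k) []\<bar> \<le> (L2_set b {..N})\<^sup>2 * series_op_bound b N ^ (2 * k)"
proof -
  let ?\<psi> = "series_op False b N (moment_vector b N k)"
  have "\<bar>moment_vector b N (Suc k) []\<bar> = \<bar>\<Sum>n\<le>N. b n * ?\<psi> (replicate n True)\<bar>"
    by (simp add: moment_vector_def series_op_def stack_op_power_Nil)
  also have "\<dots> \<le> (\<Sum>n\<le>N. \<bar>b n\<bar> * \<bar>?\<psi> (replicate n True)\<bar>)"
    by (rule order_trans[OF sum_abs]) (simp add: abs_mult)
  also have "\<dots> \<le> L2_set b {..N} * L2_set (\<lambda>n. ?\<psi> (replicate n True)) {..N}"
    by (rule L2_set_mult_ineq)
  also have "\<dots> \<le> L2_set b {..N} * L2_set ?\<psi> (stacks_upto N)"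
  proof (rule mult_left_mono[OF _ L2_set_nonneg])
    have "(\<Sum>n\<in>{..N}. (?\<psi> (replicate n True))\<^sup>2) \<le> (\<Sum>v\<in>stacks_upto N. (?\<psi> v)\<^sup>2)"
      by (rule sum_power2_reindex_le[OF _ _ finite_stacks_upto]) (auto simp: inj_on_def stacks_upto_def)
    then show "L2_set (\<lambda>n. ?\<psi> (replicate n True)) {..N} \<le> L2_set ?\<psi> (stacks_upto N)"
      unfolding L2_set_def by (rule real_sqrt_le_mono)
  qed
  also have "\<dots> \<le> L2_set b {..N} * (series_op_bound b N ^ (2 * k) * L2_set b {..N})"
    by (rule mult_left_mono[OF L2_series_op_False_moment_vector_le L2_set_nonneg])
  finally show ?thesis by (simp add: power2_eq_square mult_ac)
qed

lemma circ_moment_eq_sum_index_lists: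
  "circ_moment k a N = (\<Sum>nms\<in>index_lists N k.
     (\<Prod>(n, m)\<leftarrow>nms. a n * cnj (a m)) * circ_trace_word (concat (map word_block nms)))"
  unfolding circ_moment_def index_lists_def word_block_def ..

lemma sum_index_lists_norm_le_moment_vector:
  "(\<Sum>nms\<in>index_lists N k. cmod ((\<Prod>(n, m)\<leftarrow>nms. a n * cnj (a m)) * circ_trace_word (concat (map word_block nms))))
     \<le> moment_vector (\<lambda>n. cmod (a n)) N k []"
proof -
  have "cmod ((\<Prod>(n, m)\<leftarrow>nms. a n * cnj (a m)) * circ_trace_word w)
      \<le> (\<Prod>(n, m)\<leftarrow>nms. cmod (a n) * cmod (a m)) * real (stack_runs w [])" for nms w
  proof -
    have "cmod ((\<Prod>(n, m)\<leftarrow>nms. a n * cnj (a m)) * circ_trace_word w)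
        = (\<Prod>(n, m)\<leftarrow>nms. cmod (a n) * cmod (a m)) * real (card (nc_star_pairings w))"
      by (induction nms) (auto simp: circ_trace_word_def norm_mult)
    also have "\<dots> \<le> (\<Prod>(n, m)\<leftarrow>nms. cmod (a n) * cmod (a m)) * real (stack_runs w [])"
      by (intro mult_left_mono prod_list_nonneg) (auto simp: card_nc_star_pairings_le_stack_runs)
    finally show ?thesis .
  qed
  then show ?thesis
    by (auto intro: order_trans[OF sum_mono sum_index_lists_stack_runs_eq_moment_vector[THEN eq_refl]])
qed

lemma circ_moment_one:
  "circ_moment 1 a N = (\<Sum>n\<le>N. complex_of_real ((cmod (a n))\<^sup>2))"
proof -
  have singletons: "index_lists N 1 = (\<lambda>p. [p]) ` ({..N} \<times> {..N})"
    unfolding index_lists_def by (auto simp: length_Suc_conv)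
  have "circ_moment 1 a N = (\<Sum>p\<in>{..N} \<times> {..N}. a (fst p) * cnj (a (snd p)) * circ_trace_word (word_block p))"
    unfolding circ_moment_eq_sum_index_lists singletons by (subst sum.reindex) (auto simp: inj_on_def split_def)
  also have "\<dots> = (\<Sum>n\<le>N. \<Sum>m\<le>N. if m = n then a n * cnj (a n) else 0)"
    unfolding sum.cartesian_product
    by (intro sum.cong refl) (auto simp: circ_trace_word_def card_nc_star_pairings_word_block)
  finally show ?thesis by (simp add: complex_norm_square[symmetric])
qed

lemma hol_Lp_norm_two:
  assumes "summable (\<lambda>n. (cmod (a n))\<^sup>2)"
  shows "hol_Lp_norm 2 a = sqrt (\<Sum>n. (cmod (a n))\<^sup>2)"
proof -
  have "circ_moment (2 div 2) a N = complex_of_real (\<Sum>n\<le>N. (cmod (a n))\<^sup>2)" for N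
    using circ_moment_one[of a N] by simp
  moreover have "(\<lambda>N. complex_of_real (\<Sum>n\<le>N. (cmod (a n))\<^sup>2)) \<longlonglongrightarrow> complex_of_real (\<Sum>n. (cmod (a n))\<^sup>2)"
    by (rule tendsto_of_real[OF summable_LIMSEQ'[OF assms]])
  ultimately have "lim (\<lambda>N. circ_moment (2 div 2) a N) = complex_of_real (\<Sum>n. (cmod (a n))\<^sup>2)"
    by (simp add: limI)
  then show ?thesis
    using suminf_nonneg[OF assms] unfolding hol_Lp_norm_def by (simp add: powr_half_sqrt)
qed

section \<open>Dilations\<close>

lemma inverse_one_minus_exp_le:
  fixes t :: real
  assumes "0 < t" "t < 1"
  shows "1 / (1 - exp (- 2 * t)) \<le> 3 / (2 * t)"
proof -
  have "1 + 2 * t \<le> exp (2 * t)" by (rule exp_ge_add_one_self)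
  then have "exp (- 2 * t) \<le> 1 / (1 + 2 * t)"
    using assms by (simp add: exp_minus field_simps)
  then have "2 * t / (1 + 2 * t) \<le> 1 - exp (- 2 * t)"
    using assms by (simp add: field_simps)
  moreover have "2 * t / 3 \<le> 2 * t / (1 + 2 * t)"
    using assms by (simp add: field_simps)
  ultimately have "2 * t / 3 \<le> 1 - exp (- 2 * t)" by linarith
  then show ?thesis using assms by (simp add: field_simps)
qed

lemma sum_power2_exp_weight_le:
  fixes t :: real
  assumes "0 < t" "t < 1"
  shows "(\<Sum>n\<le>N. (exp (- real n * t) * sqrt (real n + 1))\<^sup>2) \<le> (3 / (2 * t))\<^sup>2"
proof -
  let ?r = "exp (- 2 * t)"
  have "(exp (- real n * t) * sqrt (real n + 1))\<^sup>2 = real (Suc n) * ?r ^ n" for n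
  proof -
    have "(exp (- real n * t))\<^sup>2 = exp (real n * (- 2 * t))"
      by (simp add: power2_eq_square exp_add[symmetric] algebra_simps)
    also have "\<dots> = ?r ^ n" by (rule exp_of_nat_mult)
    finally show ?thesis by (simp add: power_mult_distrib)
  qed
  then have "(\<Sum>n\<le>N. (exp (- real n * t) * sqrt (real n + 1))\<^sup>2) \<le> (1 / (1 - ?r))\<^sup>2"
    using sum_Suc_mult_power_le[of ?r N] assms by (simp add: power_divide)
  also have "\<dots> \<le> (3 / (2 * t))\<^sup>2"
    using assms by (intro power_mono inverse_one_minus_exp_le) simp_all
  finally show ?thesis .
qed

lemma series_op_bound_dilation_le:
  assumes "summable (\<lambda>n. (cmod (a n))\<^sup>2)" "0 < t" "t < 1"
  shows "series_op_bound (\<lambda>n. cmod (dilation t a n)) N \<le> 3 * sqrt (\<Sum>n. (cmod (a n))\<^sup>2) / t"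
proof -
  let ?A = "\<Sum>n. (cmod (a n))\<^sup>2"
  let ?e = "\<lambda>n. exp (- real n * t) * sqrt (real n + 1)"
  have "series_op_bound (\<lambda>n. cmod (dilation t a n)) N = 2 * (\<Sum>n\<le>N. \<bar>cmod (a n)\<bar> * \<bar>?e n\<bar>)"
    unfolding series_op_bound_def dilation_def by (simp add: sum_distrib_left norm_mult mult_ac)
  also have "\<dots> \<le> 2 * (L2_set (\<lambda>n. cmod (a n)) {..N} * L2_set ?e {..N})"
    by (intro mult_left_mono L2_set_mult_ineq) simp
  also have "\<dots> \<le> 2 * (sqrt ?A * (3 / (2 * t)))"
  proof (intro mult_left_mono mult_mono)
    show "L2_set (\<lambda>n. cmod (a n)) {..N} \<le> sqrt ?A"
      unfolding L2_set_def by (intro real_sqrt_le_mono sum_le_suminf assms(1)) auto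
    show "L2_set ?e {..N} \<le> 3 / (2 * t)"
      unfolding L2_set_def using assms(2,3)
      by (intro real_le_lsqrt sum_power2_exp_weight_le) simp_all
  qed (use suminf_nonneg[OF assms(1)] in auto)
  also have "\<dots> = 3 * sqrt ?A / t" using assms by (simp add: field_simps)
  finally show ?thesis .
qed

lemma L2_set_dilation_le:
  assumes "summable (\<lambda>n. (cmod (a n))\<^sup>2)" "0 \<le> t"
  shows "L2_set (\<lambda>n. cmod (dilation t a n)) {..N} \<le> sqrt (\<Sum>n. (cmod (a n))\<^sup>2)"
proof -
  have "L2_set (\<lambda>n. cmod (dilation t a n)) {..N} \<le> L2_set (\<lambda>n. cmod (a n)) {..N}"
    using assms(2) by (intro L2_set_mono) (simp_all add: dilation_def norm_mult mult_left_le_one_le)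
  also have "\<dots> \<le> sqrt (\<Sum>n. (cmod (a n))\<^sup>2)"
    unfolding L2_set_def by (intro real_sqrt_le_mono sum_le_suminf assms(1)) auto
  finally show ?thesis .
qed

lemma moment_bound_le_power:
  fixes A t :: real
  assumes "0 \<le> A" "0 < t"
  shows "A * (3 * sqrt A / t) ^ (2 * k) \<le> (3 * t powr (-1 + 2 / real (2 * Suc k)) * sqrt A) ^ (2 * Suc k)"
proof -
  let ?p = "2 * Suc k"
  have t_pow: "(t powr (-1 + 2 / real ?p)) ^ ?p = inverse (t ^ (2 * k))"
  proof -
    have "(t powr (-1 + 2 / real ?p)) ^ ?p = (t powr (-1 + 2 / real ?p)) powr real ?p"
      using assms(2) by (intro powr_realpow[symmetric]) simp
    also have "\<dots> = t powr ((-1 + 2 / real ?p) * real ?p)"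
      by (rule powr_powr)
    also have "(-1 + 2 / real ?p) * real ?p = - real (2 * k)" by (simp add: field_simps)
    finally show ?thesis
      using assms(2) by (simp add: powr_minus powr_realpow del: of_nat_mult)
  qed
  have sqrt_pow: "sqrt A ^ (2 * n) = A ^ n" for n
    using assms(1) by (simp add: power_mult)
  have "A * (3 * sqrt A / t) ^ (2 * k) = 3 ^ (2 * k) * A ^ Suc k * inverse (t ^ (2 * k))"
    unfolding power_divide power_mult_distrib sqrt_pow by (simp add: divide_inverse mult_ac)
  also have "\<dots> \<le> 3 ^ ?p * A ^ Suc k * inverse (t ^ (2 * k))"
    using assms by (intro mult_right_mono power_increasing) auto
  also have "\<dots> = (3 * t powr (-1 + 2 / real ?p) * sqrt A) ^ ?p"
    unfolding power_mult_distrib t_pow sqrt_pow by (simp add: mult_ac)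
  finally show ?thesis .
qed

lemma norm_circ_moment_terms_dilation_le:
  assumes "summable (\<lambda>n. (cmod (a n))\<^sup>2)" "0 < t" "t < 1"
  defines "A \<equiv> \<Sum>n. (cmod (a n))\<^sup>2"
  shows "(\<Sum>nms\<in>index_lists N (Suc k). cmod ((\<Prod>(n, m)\<leftarrow>nms. dilation t a n * cnj (dilation t a m))
           * circ_trace_word (concat (map word_block nms)))) \<le> A * (3 * sqrt A / t) ^ (2 * k)"
proof -
  let ?b = "\<lambda>n. cmod (dilation t a n)"
  have "0 \<le> A" unfolding A_def using assms(1) by (simp add: suminf_nonneg)
  have "(\<Sum>nms\<in>index_lists N (Suc k). cmod ((\<Prod>(n, m)\<leftarrow>nms. dilation t a n * cnj (dilation t a m))
           * circ_trace_word (concat (map word_block nms)))) \<le> \<bar>moment_vector ?b N (Suc k) []\<bar>"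
    using sum_index_lists_norm_le_moment_vector by (rule order_trans) simp
  also have "\<dots> \<le> (L2_set ?b {..N})\<^sup>2 * series_op_bound ?b N ^ (2 * k)"
    by (rule abs_moment_vector_Nil_le)
  also have "\<dots> \<le> (sqrt A)\<^sup>2 * (3 * sqrt A / t) ^ (2 * k)"
    using assms(1-3) unfolding A_def
    by (intro mult_mono power_mono L2_set_dilation_le series_op_bound_dilation_le series_op_bound_nonneg)
      simp_all
  finally show ?thesis using \<open>0 \<le> A\<close> by simp
qed

theorem theorem3p11:
  fixes p :: nat
  assumes "even p" and "p \<ge> 4"
  shows "\<exists>\<alpha>::real. \<forall>(a::nat \<Rightarrow> complex) (t::real).
           summable (\<lambda>n. (cmod (a n))\<^sup>2) \<longrightarrow> 0 < t \<longrightarrow> t < 1 \<longrightarrow>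
             convergent (\<lambda>N. circ_moment (p div 2) (dilation t a) N) \<and>
             hol_Lp_norm p (dilation t a) \<le> \<alpha> * t powr (-1 + 2 / real p) * hol_Lp_norm 2 a"
proof (intro exI allI impI)
  obtain m where "p = 2 * m" using assms(1) by (rule evenE)
  with assms(2) obtain k where p: "p = 2 * Suc k" by (cases m) auto
  fix a :: "nat \<Rightarrow> complex" and t :: real
  assume a: "summable (\<lambda>n. (cmod (a n))\<^sup>2)" and t: "0 < t" "t < 1"
  let ?A = "\<Sum>n. (cmod (a n))\<^sup>2"
  let ?X = "3 * t powr (-1 + 2 / real p) * sqrt ?A"
  have moments: "circ_moment (p div 2) (dilation t a) = (\<lambda>N. \<Sum>nms\<in>index_lists N (Suc k).
      (\<Prod>(n, m)\<leftarrow>nms. dilation t a n * cnj (dilation t a m)) * circ_trace_word (concat (map word_block nms)))"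
    unfolding p circ_moment_eq_sum_index_lists by auto
  have "incseq (\<lambda>N. index_lists N (Suc k))"
    by (simp add: incseq_def index_lists_mono)
  note bound = convergent_sum_incseq_finite[OF this finite_index_lists
      norm_circ_moment_terms_dilation_le[OF a t]]
  have "hol_Lp_norm p (dilation t a) \<le> (?X ^ p) powr (1 / real p)"
    unfolding hol_Lp_norm_def moments
    using bound(2) moment_bound_le_power[of ?A t k] suminf_nonneg[OF a] t p
    by (intro powr_mono2) auto
  also have "\<dots> = 3 * t powr (-1 + 2 / real p) * hol_Lp_norm 2 a"
    using power_powr_inverse[of ?X p] suminf_nonneg[OF a] p by (simp add: hol_Lp_norm_two[OF a])
  finally show "convergent (\<lambda>N. circ_moment (p div 2) (dilation t a) N) \<and>
      hol_Lp_norm p (dilation t a) \<le> 3 * t powr (-1 + 2 / real p) * hol_Lp_norm 2 a"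
    using bound(1) moments by simp
qed

end
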